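(* Let $\mathbb{F}\in\{\mathbb{R},\mathbb{C}\}$, let $k\in\{1,\dots,n\}$ be an integer and let $r>0$. Suppose $\boldsymbol A\in\mathbb{F}^{m\times n}$ satisfies the phaseless bi-Lipschitz condition on $\mathcal X=\{\boldsymbol x\in\mathbb{F}^n:\|\boldsymbol x\|_0\le(r+4)k\}$ with positive constants $L,U$, and $r>2(U/L)^2$. Then for all $\boldsymbol x\in\mathbb{F}^n$, all $\eta\ge0$, all $\boldsymbol e\in\mathbb{R}^m$ with $\|\boldsymbol e\|_2\le\eta$, and any $\boldsymbol x^\#\in\Delta_{1,\eta}(|\boldsymbol A\boldsymbol x|+\boldsymbol e)$, \[ \mathrm{dist}_1(\boldsymbol x^\#,\boldsymbol x)\le C_1\,\sigma_k(\boldsymbol x)_1+D_1\sqrt k\,\eta,\qquad \mathrm{dist}(\boldsymbol x^\#,\boldsymbol x)\le C_2\,\frac{\sigma_k(\boldsymbol x)_1}{\sqrt k}+D_2\,\eta, \] where \[ C_1=\frac{2\frac UL\big(r^{-1/2}+1\big)(2+r)^{1/2}}{1-\frac UL(2/r)^{1/2}}+2,\quad D_1=\frac1L\cdot\frac{2(2+r)^{1/2}}{1-\frac UL(2/r)^{1/2}}, \] \[ C_2=\frac{\frac UL\big(r^{-1/2}+1\big)\big(1+(r/2)^{-1/2}\big)}{1-\frac UL(2/r)^{1/2}}+r^{-1/2}+1,\quad D_2=\frac1L\cdot\frac{2\big(1+(r/2)^{-1/2}\big)}{1-\frac UL(2/r)^{1/2}}. \]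
   Context: $\mathbb{F}\in\{\mathbb{R},\mathbb{C}\}$. $\|\boldsymbol u\|_q$ is the usual $\ell_q$ norm, $\|\boldsymbol u\|_0$ the number of nonzero entries, $|\boldsymbol u|$ the vector of entrywise moduli. $\mathrm{dist}_q(\boldsymbol x,\boldsymbol y)=\min_{c\in\mathbb{F},|c|=1}\|\boldsymbol x-c\boldsymbol y\|_q$, $\mathrm{dist}=\mathrm{dist}_2$. $\Sigma_k=\{\boldsymbol z\in\mathbb{F}^n:\|\boldsymbol z\|_0\le k\}$, $\sigma_k(\boldsymbol x)_q=\min_{\boldsymbol z\in\Sigma_k}\mathrm{dist}_q(\boldsymbol x,\boldsymbol z)$. $\boldsymbol A$ satisfies the phaseless bi-Lipschitz condition on $\mathcal X$ with positive constants $L,U$ if $L\,\mathrm{dist}(\boldsymbol x,\boldsymbol y)\le\||\boldsymbol A\boldsymbol x|-|\boldsymbol A\boldsymbol y|\|_2\le U\,\mathrm{dist}(\boldsymbol x,\boldsymbol y)$ for all $\boldsymbol x,\boldsymbol y\in\mathcal X$. $\Delta_{1,\eta}(\boldsymbol y)=\operatorname{argmin}_{\boldsymbol z\in\mathbb{F}^n}\{\|\boldsymbol z\|_1:\||\boldsymbol A\boldsymbol z|-\boldsymbol y\|_2\le\eta\}$. *)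

theory Defs
  imports "HOL-Analysis.Analysis"
begin

text \<open>Vectors in F^n are modelled as 'a^'n with index type 'n (n = CARD('n)),
  matrices in F^{m x n} as 'a^'n^'m; F is instantiated to real and to complex.\<close>

definition l1norm :: "'a::real_normed_vector ^ 'n \<Rightarrow> real" where
  "l1norm x = (\<Sum>i\<in>UNIV. norm (x $ i))"

definition l2norm :: "'a::real_normed_vector ^ 'n \<Rightarrow> real" where
  "l2norm x = sqrt (\<Sum>i\<in>UNIV. (norm (x $ i))^2)"

definition l0norm :: "'a::zero ^ 'n \<Rightarrow> nat" where
  "l0norm x = card {i. x $ i \<noteq> 0}"

definition absAx :: "'a::real_normed_field ^ 'n ^ 'm \<Rightarrow> 'a ^ 'n \<Rightarrow> real ^ 'm" where
  "absAx A x = (\<chi> i. norm ((A *v x) $ i))"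

definition pdist :: "('a::real_normed_field ^ 'n \<Rightarrow> real) \<Rightarrow> 'a ^ 'n \<Rightarrow> 'a ^ 'n \<Rightarrow> real" where
  "pdist N x y = Inf ((\<lambda>c. N (x - c *s y)) ` {c. norm c = 1})"

definition sigma1 :: "nat \<Rightarrow> 'a::real_normed_field ^ 'n \<Rightarrow> real" where
  "sigma1 k x = Inf ((\<lambda>z. pdist l1norm x z) ` {z. l0norm z \<le> k})"

definition phaseless_biLip ::
  "'a::real_normed_field ^ 'n ^ 'm \<Rightarrow> ('a ^ 'n) set \<Rightarrow> real \<Rightarrow> real \<Rightarrow> bool" where
  "phaseless_biLip A X L U \<longleftrightarrow> L > 0 \<and> U > 0 \<and>
     (\<forall>x\<in>X. \<forall>y\<in>X. L * pdist l2norm x y \<le> l2norm (absAx A x - absAx A y)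
                  \<and> l2norm (absAx A x - absAx A y) \<le> U * pdist l2norm x y)"

definition Delta1 :: "'a::real_normed_field ^ 'n ^ 'm \<Rightarrow> real \<Rightarrow> real ^ 'm \<Rightarrow> ('a ^ 'n) set" where
  "Delta1 A \<eta> y = {z. l2norm (absAx A z - y) \<le> \<eta> \<and>
      (\<forall>w. l2norm (absAx A w - y) \<le> \<eta> \<longrightarrow> l1norm z \<le> l1norm w)}"

definition corC1 :: "real \<Rightarrow> real \<Rightarrow> real \<Rightarrow> real" where
  "corC1 r L U = 2 * (U/L) * (1 / sqrt r + 1) * sqrt (2 + r) / (1 - (U/L) * sqrt (2/r)) + 2"

definition corD1 :: "real \<Rightarrow> real \<Rightarrow> real \<Rightarrow> real" where
  "corD1 r L U = (1/L) * (2 * sqrt (2 + r) / (1 - (U/L) * sqrt (2/r)))"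

definition corC2 :: "real \<Rightarrow> real \<Rightarrow> real \<Rightarrow> real" where
  "corC2 r L U = (U/L) * (1 / sqrt r + 1) * (1 + 1 / sqrt (r/2)) / (1 - (U/L) * sqrt (2/r))
                 + 1 / sqrt r + 1"

definition corD2 :: "real \<Rightarrow> real \<Rightarrow> real \<Rightarrow> real" where
  "corD2 r L U = (1/L) * (2 * (1 + 1 / sqrt (r/2)) / (1 - (U/L) * sqrt (2/r)))"

end

theory Submission
  imports Defs
begin

text \<open>
  Let T carry the k largest entries of x in modulus, let a and \<sigma> be the l1 masses of x# and
  of x off T, and pick s \<ge> (r + 2) k. Removing from both vectors their s largest remaining
  entries leaves heads u, v with at most k + s \<le> (r + 4) k nonzero entries, and tails whose
  images under A have norm at most U a / sqrt s and U \<sigma> / sqrt s by the shelling argument.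
  For d = dist(u, v), the lower Lipschitz bound and the feasibility of x and x# give the tube
  inequality L d \<le> U (a + \<sigma>) / sqrt s + 2 \<eta>, and the l1-minimality of x# gives the cone
  inequality a \<le> sqrt k d + \<sigma>. Since U sqrt k / (L sqrt s) \<le> (U / L) sqrt (2 / r) < 1,
  these two inequalities bound d, and both error estimates follow by the triangle inequality.
\<close>

section \<open>Norms and restrictions of vectors\<close>

lemma l2norm_eq_norm: "l2norm = (norm :: 'a::real_normed_vector ^ 'n \<Rightarrow> real)"
  by (simp add: fun_eq_iff l2norm_def norm_vec_def L2_set_def)

lemma l1norm_nonneg: "0 \<le> l1norm x"
  unfolding l1norm_def by (simp add: sum_nonneg)

lemma l1norm_split: "l1norm w = (\<Sum>i\<in>S. norm (w $ i)) + (\<Sum>i\<in>-S. norm (w $ i))"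
  unfolding l1norm_def using sum.subset_diff[of S UNIV] by (simp add: Compl_eq_Diff_UNIV add.commute)

lemma norm_vec_power2: "(norm w)\<^sup>2 = (\<Sum>i\<in>UNIV. (norm (w $ i))\<^sup>2)"
  by (simp add: norm_vec_def L2_set_def sum_nonneg)

lemma norm_smult_unimodular:
  fixes c :: "'a::real_normed_field"
  assumes "norm c = 1"
  shows "norm (c *s y) = norm y"
  unfolding norm_vec_def by (rule L2_set_cong) (auto simp: norm_mult assms)

lemma sum_norm_le_sqrt_card_norm: "(\<Sum>i\<in>S. norm (w $ i)) \<le> sqrt (card S) * norm w"
proof -
  have "(\<Sum>i\<in>S. norm (w $ i)) \<le> L2_set (\<lambda>i. norm (w $ i)) S * sqrt (card S)"
    using L2_set_mult_ineq[of "\<lambda>i. norm (w $ i)" "\<lambda>_. 1" S] by (simp add: L2_set_constant)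
  also have "\<dots> \<le> norm w * sqrt (card S)"
    unfolding norm_vec_def L2_set_def
    by (intro mult_right_mono real_sqrt_le_mono sum_mono2) auto
  finally show ?thesis by (simp add: mult.commute)
qed

definition vec_restrict :: "'n set \<Rightarrow> 'a::zero ^ 'n \<Rightarrow> 'a ^ 'n" where
  "vec_restrict S w = (\<chi> i. if i \<in> S then w $ i else 0)"

lemma vec_restrict_nth [simp]: "vec_restrict S w $ i = (if i \<in> S then w $ i else 0)"
  by (simp add: vec_restrict_def)

lemma l1norm_vec_restrict: "l1norm (vec_restrict S w) = (\<Sum>i\<in>S. norm (w $ i))"
  unfolding l1norm_def by (simp add: if_distrib sum.If_cases)

lemma l0norm_vec_restrict: "l0norm (vec_restrict S w) \<le> card S"
  unfolding l0norm_def by (rule card_mono) auto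

section \<open>Best supports and the shelling bound\<close>

definition best_support :: "nat \<Rightarrow> 'a::real_normed_vector ^ 'n \<Rightarrow> 'n set \<Rightarrow> bool" where
  "best_support s w T \<longleftrightarrow> card T \<le> s \<and>
     (\<forall>T'. card T' \<le> s \<longrightarrow> (\<Sum>i\<in>T'. norm (w $ i)) \<le> (\<Sum>i\<in>T. norm (w $ i)))"

lemma best_support_card: "best_support s w T \<Longrightarrow> card T \<le> s"
  by (simp add: best_support_def)

lemma best_support_exists:
  obtains T where "best_support s w T"
proof -
  let ?mass = "\<lambda>T. \<Sum>i\<in>T. norm (w $ i)"
  have fin: "finite (?mass ` {T. card T \<le> s})" by simp
  have ne: "?mass ` {T. card T \<le> s} \<noteq> {}" by (auto intro!: exI[of _ "{}"])
  obtain T where "card T \<le> s" "?mass T = Max (?mass ` {T. card T \<le> s})"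
    using Max_in[OF fin ne] by auto
  then show ?thesis
    using Max_ge[OF fin] by (intro that) (auto simp: best_support_def)
qed

lemma best_support_tail_le:
  assumes T: "best_support s w T"
  shows "real s * norm (vec_restrict (-T) w $ j) \<le> (\<Sum>i\<in>T. norm (w $ i))"
proof (cases "j \<in> T")
  case True
  then show ?thesis by (simp add: sum_nonneg)
next
  case j: False
  show ?thesis
  proof (cases "card T < s")
    case True
    then have "card (insert j T) \<le> s" by (simp add: card_insert_if)
    then have "(\<Sum>i\<in>insert j T. norm (w $ i)) \<le> (\<Sum>i\<in>T. norm (w $ i))"
      using T unfolding best_support_def by blast
    then show ?thesis using j by (simp add: sum_nonneg)
  next
    case False
    then have card: "card T = s" using T unfolding best_support_def by linarith
    have "norm (w $ j) \<le> norm (w $ i)" if i: "i \<in> T" for i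
    proof -
      have "0 < card T" using i by (auto simp: card_gt_0_iff)
      then have "card (insert j (T - {i})) \<le> s"
        using i j card by (simp add: card_Diff_singleton)
      then have "(\<Sum>l\<in>insert j (T - {i}). norm (w $ l)) \<le> (\<Sum>l\<in>T. norm (w $ l))"
        using T unfolding best_support_def by blast
      then show ?thesis using i j by (simp add: sum_diff1)
    qed
    then have "(\<Sum>i\<in>T. norm (w $ j)) \<le> (\<Sum>i\<in>T. norm (w $ i))" by (rule sum_mono)
    then show ?thesis using j card by simp
  qed
qed

lemma best_support_meets_support:
  assumes "best_support s w T" and "1 \<le> s" and "w \<noteq> 0"
  shows "\<exists>i\<in>T. w $ i \<noteq> 0"
proof -
  obtain j where j: "w $ j \<noteq> 0" using assms(3) by (auto simp: vec_eq_iff)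
  have "card {j} \<le> s" using assms(2) by simp
  then have "(\<Sum>i\<in>{j}. norm (w $ i)) \<le> (\<Sum>i\<in>T. norm (w $ i))"
    using assms(1) unfolding best_support_def by blast
  then have "0 < (\<Sum>i\<in>T. norm (w $ i))"
    using j by (simp add: order_less_le_trans[of 0 "norm (w $ j)"])
  then show ?thesis by (metis less_irrefl norm_zero sum.neutral)
qed

lemma norm_sparse_flat_le:
  fixes w :: "'a::real_normed_vector ^ 'n"
  assumes sparse: "l0norm w \<le> s" and flat: "\<And>i. real s * norm (w $ i) \<le> b"
  shows "norm w * sqrt s \<le> b"
proof (cases "s = 0")
  case True
  then show ?thesis using flat[of undefined] by simp
next
  case False
  define Z where "Z = {i. w $ i \<noteq> 0}"
  have entry: "norm (w $ i) \<le> b / s" for i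
    using flat[of i] False by (simp add: field_simps)
  have "(norm w)\<^sup>2 = (\<Sum>i\<in>Z. (norm (w $ i))\<^sup>2)"
    unfolding norm_vec_power2 Z_def by (rule sum.mono_neutral_right) auto
  also have "\<dots> \<le> (\<Sum>i\<in>Z. (b / s)\<^sup>2)"
    by (rule sum_mono) (use entry in \<open>simp add: power_mono\<close>)
  also have "\<dots> \<le> s * (b / s)\<^sup>2"
    using sparse by (simp add: Z_def l0norm_def mult_right_mono)
  finally have "(norm w)\<^sup>2 * s \<le> s * (b / s)\<^sup>2 * s"
    by (simp add: mult_right_mono)
  also have "\<dots> = b\<^sup>2"
    using False by (simp add: power2_eq_square)
  finally have "(norm w * sqrt s)\<^sup>2 \<le> b\<^sup>2"
    by (simp add: power_mult_distrib)
  moreover have "0 \<le> b"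
    using flat[of undefined] by (meson mult_nonneg_nonneg norm_ge_zero of_nat_0_le_iff order_trans)
  ultimately show ?thesis by (rule power2_le_imp_le)
qed

text \<open>The s largest entries of w form an s-sparse head with entries at most b / s. Every entry
  of the remaining tail is at most the l1 mass of the head divided by s, and the tail has
  smaller support, so the induction hypothesis applies to it.\<close>
lemma shelling:
  fixes f :: "'a::real_normed_vector ^ 'n \<Rightarrow> 'b::real_normed_vector"
  assumes f: "linear f" and U: "0 \<le> U"
    and sparse: "\<And>z. l0norm z \<le> s \<Longrightarrow> norm (f z) \<le> U * norm z"
    and flat: "\<And>i. real s * norm (w $ i) \<le> b"
  shows "norm (f w) * sqrt s \<le> U * (b + l1norm w)"
  using flat
proof (induction "l0norm w" arbitrary: w b rule: less_induct)
  case less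
  have b: "0 \<le> b"
    using less.prems[of undefined] by (meson mult_nonneg_nonneg norm_ge_zero of_nat_0_le_iff order_trans)
  show ?case
  proof (cases "s = 0 \<or> w = 0")
    case True
    then show ?thesis using U b by (auto simp: linear_0[OF f] l1norm_nonneg)
  next
    case False
    obtain T where T: "best_support s w T" by (rule best_support_exists)
    define head where "head = vec_restrict T w"
    define tail where "tail = vec_restrict (-T) w"
    have fewer: "l0norm tail < l0norm w"
      using best_support_meets_support[OF T] False
      unfolding l0norm_def tail_def by (intro psubset_card_mono) auto
    have "real s * norm (tail $ i) \<le> (\<Sum>i\<in>T. norm (w $ i))" for i
      unfolding tail_def by (rule best_support_tail_le[OF T])
    then have "norm (f tail) * sqrt s \<le> U * ((\<Sum>i\<in>T. norm (w $ i)) + l1norm tail)"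
      by (rule less.hyps[OF fewer])
    also have "(\<Sum>i\<in>T. norm (w $ i)) + l1norm tail = l1norm w"
      unfolding tail_def l1norm_vec_restrict by (rule l1norm_split[symmetric])
    finally have tail_bound: "norm (f tail) * sqrt s \<le> U * l1norm w" .
    have "l0norm head \<le> s"
      using l0norm_vec_restrict[of T w] best_support_card[OF T] unfolding head_def by linarith
    then have "norm (f head) * sqrt s \<le> U * norm head * sqrt s"
      using sparse by (simp add: mult_right_mono)
    also have "\<dots> = U * (norm head * sqrt s)" by simp
    also have "\<dots> \<le> U * b"
      using norm_sparse_flat_le[OF \<open>l0norm head \<le> s\<close>, of b] less.prems U b
      by (intro mult_left_mono) (simp_all add: head_def)
    finally have head_bound: "norm (f head) * sqrt s \<le> U * b" .
    have "w = head + tail"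
      by (simp add: vec_eq_iff head_def tail_def)
    then have "f w = f head + f tail"
      by (simp add: linear_add[OF f])
    then have "norm (f w) * sqrt s \<le> (norm (f head) + norm (f tail)) * sqrt s"
      by (simp add: mult_right_mono norm_triangle_ineq)
    then show ?thesis
      using head_bound tail_bound by (simp add: distrib_left distrib_right)
  qed
qed

lemma shelling_best_support:
  fixes f :: "'a::real_normed_vector ^ 'n \<Rightarrow> 'b::real_normed_vector"
  assumes T: "best_support s w T" and "linear f" and "0 \<le> U"
    and "\<And>z. l0norm z \<le> s \<Longrightarrow> norm (f z) \<le> U * norm z"
  shows "norm (f (vec_restrict (-T) w)) * sqrt s \<le> U * l1norm w"
proof -
  have "norm (f (vec_restrict (-T) w)) * sqrt s
      \<le> U * ((\<Sum>i\<in>T. norm (w $ i)) + l1norm (vec_restrict (-T) w))"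
    by (rule shelling) (use assms best_support_tail_le[OF T] in auto)
  then show ?thesis by (simp add: l1norm_vec_restrict flip: l1norm_split)
qed

section \<open>Distances up to a global phase\<close>

lemma pdist_le:
  fixes c :: "'a::real_normed_field"
  assumes "\<And>z. 0 \<le> N z" and "norm c = 1"
  shows "pdist N x y \<le> N (x - c *s y)"
  unfolding pdist_def by (rule cInf_lower) (use assms in \<open>auto intro!: bdd_belowI[of _ 0]\<close>)

lemma pdist_greatest:
  fixes x y :: "'a::real_normed_field ^ 'n"
  assumes "\<And>c. norm c = 1 \<Longrightarrow> B \<le> N (x - c *s y)"
  shows "B \<le> pdist N x y"
  unfolding pdist_def by (rule cInf_greatest) (use assms in \<open>auto intro!: exI[of _ 1]\<close>)

lemma pdist_greatest_affine:
  fixes x y :: "'a::real_normed_field ^ 'n"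
  assumes "0 \<le> K" and "\<And>c. norm c = 1 \<Longrightarrow> B \<le> K * N (x - c *s y) + E"
  shows "B \<le> K * pdist N x y + E"
proof (cases "K = 0")
  case True
  then show ?thesis using assms(2)[of 1] by simp
next
  case False
  then have K: "0 < K" using assms(1) by simp
  have "(B - E) / K \<le> pdist N x y"
    by (rule pdist_greatest) (use assms(2) K in \<open>simp add: field_simps\<close>)
  then show ?thesis using K by (simp add: field_simps)
qed

lemma pdist_norm_zero_right [simp]: "pdist norm x (0 :: 'a::real_normed_field ^ 'n) = norm x"
proof -
  have "(\<lambda>c. norm (x - c *s 0)) ` {c :: 'a. norm c = 1} = {norm x}"
    by (auto intro!: image_eqI[of _ _ 1])
  then show ?thesis by (simp add: pdist_def)
qed

lemma pdist_norm_triangle: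
  fixes x y u v :: "'a::real_normed_field ^ 'n"
  shows "pdist norm y x \<le> pdist norm u v + (norm (y - u) + norm (x - v))"
proof -
  have "pdist norm y x \<le> 1 * pdist norm u v + (norm (y - u) + norm (x - v))"
  proof (rule pdist_greatest_affine)
    fix c :: 'a assume c: "norm c = 1"
    have "pdist norm y x \<le> norm (y - c *s x)" by (rule pdist_le) (simp_all add: c)
    also have "y - c *s x = (u - c *s v) + (y - u) - c *s (x - v)"
      by (simp add: vec_eq_iff algebra_simps)
    also have "norm \<dots> \<le> norm (u - c *s v) + norm (y - u) + norm (c *s (x - v))"
      by (rule order_trans[OF norm_triangle_ineq4 add_right_mono[OF norm_triangle_ineq]])
    also have "norm (c *s (x - v)) = norm (x - v)" by (rule norm_smult_unimodular[OF c])
    finally show "pdist norm y x \<le> 1 * norm (u - c *s v) + (norm (y - u) + norm (x - v))"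
      by simp
  qed simp
  then show ?thesis by simp
qed

lemma sum_norm_diff_le_norm_diff:
  fixes x y u v :: "'a::real_normed_field ^ 'n"
  assumes "card T \<le> k" and "\<forall>i\<in>T. u $ i = y $ i" and "\<forall>i\<in>T. v $ i = x $ i"
  shows "(\<Sum>i\<in>T. norm (y $ i - c * x $ i)) \<le> sqrt k * norm (u - c *s v)"
proof -
  have "(\<Sum>i\<in>T. norm (y $ i - c * x $ i)) = (\<Sum>i\<in>T. norm ((u - c *s v) $ i))"
    using assms(2,3) by simp
  also have "\<dots> \<le> sqrt (card T) * norm (u - c *s v)"
    by (rule sum_norm_le_sqrt_card_norm)
  also have "\<dots> \<le> sqrt k * norm (u - c *s v)"
    using assms(1) by (intro mult_right_mono) auto
  finally show ?thesis .
qed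

lemma l1_tail_le_cone:
  fixes x y u v :: "'a::real_normed_field ^ 'n"
  assumes l1: "l1norm y \<le> l1norm x"
    and T: "card T \<le> k" "\<forall>i\<in>T. u $ i = y $ i" "\<forall>i\<in>T. v $ i = x $ i"
  shows "(\<Sum>i\<in>-T. norm (y $ i)) \<le> sqrt k * pdist norm u v + (\<Sum>i\<in>-T. norm (x $ i))"
proof (rule pdist_greatest_affine)
  fix c :: 'a assume c: "norm c = 1"
  have "(\<Sum>i\<in>-T. norm (y $ i)) \<le> (\<Sum>i\<in>T. norm (x $ i) - norm (y $ i)) + (\<Sum>i\<in>-T. norm (x $ i))"
    using l1 l1norm_split[of y T] l1norm_split[of x T] by (simp add: sum_subtractf)
  also have "(\<Sum>i\<in>T. norm (x $ i) - norm (y $ i)) \<le> (\<Sum>i\<in>T. norm (y $ i - c * x $ i))"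
  proof (rule sum_mono)
    fix i
    show "norm (x $ i) - norm (y $ i) \<le> norm (y $ i - c * x $ i)"
      using norm_triangle_ineq2[of "c * x $ i" "y $ i"] by (simp add: norm_mult c norm_minus_commute)
  qed
  also have "\<dots> \<le> sqrt k * norm (u - c *s v)"
    by (rule sum_norm_diff_le_norm_diff[OF T])
  finally show "(\<Sum>i\<in>-T. norm (y $ i)) \<le> sqrt k * norm (u - c *s v) + (\<Sum>i\<in>-T. norm (x $ i))"
    by simp
qed simp

lemma pdist_l1norm_le_cone:
  fixes x y u v :: "'a::real_normed_field ^ 'n"
  assumes T: "card T \<le> k" "\<forall>i\<in>T. u $ i = y $ i" "\<forall>i\<in>T. v $ i = x $ i"
  shows "pdist l1norm y x
           \<le> sqrt k * pdist norm u v + ((\<Sum>i\<in>-T. norm (y $ i)) + (\<Sum>i\<in>-T. norm (x $ i)))"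
proof (rule pdist_greatest_affine)
  fix c :: 'a assume c: "norm c = 1"
  have "pdist l1norm y x \<le> l1norm (y - c *s x)"
    by (rule pdist_le) (simp_all add: l1norm_nonneg c)
  also have "\<dots> = (\<Sum>i\<in>T. norm (y $ i - c * x $ i)) + (\<Sum>i\<in>-T. norm (y $ i - c * x $ i))"
    using l1norm_split[of "y - c *s x" T] by simp
  also have "(\<Sum>i\<in>-T. norm (y $ i - c * x $ i)) \<le> (\<Sum>i\<in>-T. norm (y $ i) + norm (x $ i))"
  proof (rule sum_mono)
    fix i
    show "norm (y $ i - c * x $ i) \<le> norm (y $ i) + norm (x $ i)"
      using norm_triangle_ineq4[of "y $ i" "c * x $ i"] by (simp add: norm_mult c)
  qed
  also have "(\<Sum>i\<in>T. norm (y $ i - c * x $ i)) \<le> sqrt k * norm (u - c *s v)"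
    by (rule sum_norm_diff_le_norm_diff[OF T])
  finally show "pdist l1norm y x
      \<le> sqrt k * norm (u - c *s v) + ((\<Sum>i\<in>-T. norm (y $ i)) + (\<Sum>i\<in>-T. norm (x $ i)))"
    by (simp add: sum.distrib)
qed simp

lemma sigma1_ge_tail:
  fixes x :: "'a::real_normed_field ^ 'n"
  assumes T: "best_support k x T"
  shows "(\<Sum>i\<in>-T. norm (x $ i)) \<le> sigma1 k x"
  unfolding sigma1_def
proof (rule cInf_greatest)
  show "(\<lambda>z. pdist l1norm x z) ` {z. l0norm z \<le> k} \<noteq> {}"
    by (auto intro!: exI[of _ 0] simp: l0norm_def)
next
  fix m assume "m \<in> (\<lambda>z. pdist l1norm x z) ` {z. l0norm z \<le> k}"
  then obtain z where z: "l0norm z \<le> k" "m = pdist l1norm x z" by auto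
  define Z where "Z = {i. z $ i \<noteq> 0}"
  have "card Z \<le> k" using z(1) by (simp add: Z_def l0norm_def)
  then have mass: "(\<Sum>i\<in>Z. norm (x $ i)) \<le> (\<Sum>i\<in>T. norm (x $ i))"
    using T unfolding best_support_def by blast
  have "(\<Sum>i\<in>-T. norm (x $ i)) \<le> pdist l1norm x z"
  proof (rule pdist_greatest)
    fix c :: 'a
    have "(\<Sum>i\<in>-T. norm (x $ i)) \<le> (\<Sum>i\<in>-Z. norm (x $ i))"
      using mass l1norm_split[of x T] l1norm_split[of x Z] by simp
    also have "\<dots> = (\<Sum>i\<in>-Z. norm ((x - c *s z) $ i))"
      by (rule sum.cong) (auto simp: Z_def)
    also have "\<dots> \<le> l1norm (x - c *s z)"
      using l1norm_split[of "x - c *s z" Z] by (simp add: sum_nonneg)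
    finally show "(\<Sum>i\<in>-T. norm (x $ i)) \<le> l1norm (x - c *s z)" .
  qed
  then show "(\<Sum>i\<in>-T. norm (x $ i)) \<le> m" using z by simp
qed

section \<open>Phaseless measurements\<close>

lemma absAx_zero [simp]: "absAx A 0 = 0"
  by (simp add: absAx_def vec_eq_iff)

lemma norm_absAx: "norm (absAx A x) = norm (A *v x)"
  by (simp add: absAx_def norm_vec_def)

lemma norm_absAx_diff_le: "norm (absAx A x - absAx A y) \<le> norm (A *v (x - y))"
proof -
  have "norm (absAx A x - absAx A y) \<le> norm (A *v x - A *v y)"
    by (rule norm_le_componentwise_cart) (simp add: absAx_def norm_triangle_ineq3)
  then show ?thesis by (simp add: matrix_vector_mult_diff_distrib)
qed

lemma norm_absAx_diff_triangle:
  "norm (absAx A u - absAx A v)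
     \<le> norm (A *v (y - u)) + norm (absAx A y - absAx A x) + norm (A *v (x - v))"
proof -
  have "norm (absAx A u - absAx A y) \<le> norm (A *v (y - u))"
    using norm_absAx_diff_le[of A y u] by (simp add: norm_minus_commute)
  moreover have "norm (absAx A x - absAx A v) \<le> norm (A *v (x - v))"
    by (rule norm_absAx_diff_le)
  ultimately show ?thesis
    by (intro norm_diff_triangle_le[of _ "absAx A x"] norm_diff_triangle_le[of _ "absAx A y"]) auto
qed

lemma phaseless_biLip_norm_le:
  assumes "phaseless_biLip A X L U" and "0 \<in> X" and "z \<in> X"
  shows "norm (A *v z) \<le> U * norm z"
proof -
  have "l2norm (absAx A z - absAx A 0) \<le> U * pdist l2norm z 0"
    using assms unfolding phaseless_biLip_def by blast
  then show ?thesis by (simp add: l2norm_eq_norm norm_absAx)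
qed

lemma phaseless_biLip_norm_ge:
  assumes "phaseless_biLip A X L U" and "0 \<in> X" and "z \<in> X"
  shows "L * norm z \<le> norm (A *v z)"
proof -
  have "L * pdist l2norm z 0 \<le> l2norm (absAx A z - absAx A 0)"
    using assms unfolding phaseless_biLip_def by blast
  then show ?thesis by (simp add: l2norm_eq_norm norm_absAx)
qed

lemma phaseless_biLip_lower_le_upper:
  assumes "phaseless_biLip A X L U" and "0 \<in> X" and "z \<in> X" and "z \<noteq> 0"
  shows "L \<le> U"
proof -
  have "L * norm z \<le> U * norm z"
    using phaseless_biLip_norm_ge[OF assms(1-3)] phaseless_biLip_norm_le[OF assms(1-3)] by linarith
  then show ?thesis using assms(4) by simp
qed

lemma Delta1_l1norm_le:
  assumes "xs \<in> Delta1 A \<eta> (absAx A x + e)" and "l2norm e \<le> \<eta>"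
  shows "l1norm xs \<le> l1norm x"
  using assms by (simp add: Delta1_def l2norm_eq_norm)

lemma Delta1_absAx_close:
  assumes "xs \<in> Delta1 A \<eta> (absAx A x + e)" and "l2norm e \<le> \<eta>"
  shows "norm (absAx A xs - absAx A x) \<le> 2 * \<eta>"
proof -
  have "norm (absAx A xs - (absAx A x + e)) \<le> \<eta>"
    using assms(1) by (simp add: Delta1_def l2norm_eq_norm)
  then show ?thesis
    using assms(2) norm_triangle_ineq[of "absAx A xs - (absAx A x + e)" e]
    by (simp add: l2norm_eq_norm)
qed

section \<open>Scalar estimates\<close>

lemma sparsity_ratio_bounds:
  fixes L U r q :: real
  assumes L: "0 < L" "L \<le> U" and r: "2 * (U / L)\<^sup>2 < r"
    and q: "0 \<le> q" "q\<^sup>2 * (r + 2) \<le> 1"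
  shows "2 < r" and "2 * q \<le> 1" and "q \<le> sqrt (2 / r)"
    and "U / L * q \<le> U / L * sqrt (2 / r)" and "U / L * sqrt (2 / r) < 1"
proof -
  have "1 \<le> (U / L)\<^sup>2" using L by (simp add: one_le_power)
  then show r2: "2 < r" using r by linarith
  have "q\<^sup>2 * 4 \<le> q\<^sup>2 * (r + 2)" using r2 by (intro mult_left_mono) auto
  then have "(2 * q)\<^sup>2 \<le> 1\<^sup>2" using q by (simp add: power_mult_distrib)
  then show "2 * q \<le> 1" by (rule power2_le_imp_le) simp
  have "q\<^sup>2 * r \<le> q\<^sup>2 * (r + 2)" using q by (intro mult_left_mono) auto
  then have "q\<^sup>2 * r \<le> 2" using q by linarith
  then show "q \<le> sqrt (2 / r)" using r2 by (intro real_le_rsqrt) (simp add: field_simps)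
  then show "U / L * q \<le> U / L * sqrt (2 / r)" using L by (intro mult_left_mono) auto
  have "(U / L * sqrt (2 / r))\<^sup>2 = 2 * (U / L)\<^sup>2 / r"
    using r2 by (simp only: power_mult_distrib real_sqrt_pow2) simp
  also have "\<dots> < 1\<^sup>2" using r r2 by simp
  finally show "U / L * sqrt (2 / r) < 1" by (rule power_less_imp_less_base) simp
qed

lemma tube_cone_dist_le:
  fixes L U K S d a \<sigma> \<eta> :: real
  defines "\<theta> \<equiv> U / L * (K / S)"
  assumes "0 < L" "0 \<le> U" "0 < K" "0 < S" "\<theta> < 1"
    and tube: "L * d \<le> U * (a + \<sigma>) / S + 2 * \<eta>" and cone: "a \<le> K * d + \<sigma>"
  shows "d \<le> (2 * \<theta> * (\<sigma> / K) + 2 * \<eta> / L) / (1 - \<theta>)"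
proof -
  have "U * (a + \<sigma>) / S \<le> U * (K * d + 2 * \<sigma>) / S"
    using cone assms by (intro divide_right_mono mult_left_mono) auto
  with tube have "L * d \<le> U * (K * d + 2 * \<sigma>) / S + 2 * \<eta>" by linarith
  then have "d \<le> (U * (K * d + 2 * \<sigma>) / S + 2 * \<eta>) / L"
    using assms(2) by (simp add: pos_le_divide_eq mult.commute)
  also have "\<dots> = \<theta> * d + (2 * \<theta> * (\<sigma> / K) + 2 * \<eta> / L)"
    using assms(2-5) unfolding \<theta>_def by (simp add: field_simps)
  finally have "d * (1 - \<theta>) \<le> 2 * \<theta> * (\<sigma> / K) + 2 * \<eta> / L"
    by (simp add: algebra_simps)
  then show ?thesis using \<open>\<theta> < 1\<close> by (simp add: field_simps)
qed

lemma sharp_error_bounds: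
  fixes L U K S d a \<sigma> \<eta> P1 P2 :: real
  defines "q \<equiv> K / S" and "\<theta> \<equiv> U / L * (K / S)"
  assumes L: "0 < L" and U: "0 \<le> U" and K: "0 < K" and S: "0 < S" and \<theta>1: "\<theta> < 1"
    and tube: "L * d \<le> U * (a + \<sigma>) / S + 2 * \<eta>" and cone: "a \<le> K * d + \<sigma>"
    and P1: "P1 \<le> K * d + a + \<sigma>" and P2: "P2 \<le> d + (a + \<sigma>) / S"
  shows "P1 \<le> (4 * \<theta> / (1 - \<theta>) + 2) * \<sigma> + 4 / (L * (1 - \<theta>)) * K * \<eta>"
    and "P2 \<le> (2 * \<theta> * (1 + q) / (1 - \<theta>) + 2 * q) * (\<sigma> / K)
              + 2 * (1 + q) / (L * (1 - \<theta>)) * \<eta>"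
proof -
  have gap: "1 - \<theta> \<noteq> 0" using \<theta>1 by simp
  have d: "d \<le> (2 * \<theta> * (\<sigma> / K) + 2 * \<eta> / L) / (1 - \<theta>)"
    using tube_cone_dist_le[OF L U K S _ tube cone] \<theta>1 unfolding \<theta>_def by blast
  have "P1 \<le> 2 * K * d + 2 * \<sigma>" using P1 cone by linarith
  also have "\<dots> \<le> 2 * K * ((2 * \<theta> * (\<sigma> / K) + 2 * \<eta> / L) / (1 - \<theta>)) + 2 * \<sigma>"
    using d K by (intro add_right_mono mult_left_mono) auto
  also have "\<dots> = (4 * \<theta> / (1 - \<theta>) + 2) * \<sigma> + 4 / (L * (1 - \<theta>)) * K * \<eta>"
    using L K gap by (simp add: divide_simps) (simp add: algebra_simps)
  finally show "P1 \<le> (4 * \<theta> / (1 - \<theta>) + 2) * \<sigma> + 4 / (L * (1 - \<theta>)) * K * \<eta>" .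
  have "(a + \<sigma>) / S \<le> (K * d + 2 * \<sigma>) / S"
    using cone S by (simp add: divide_right_mono)
  also have "\<dots> = q * d + 2 * q * (\<sigma> / K)"
    using K S unfolding q_def by (simp add: field_simps)
  finally have "P2 \<le> (1 + q) * d + 2 * q * (\<sigma> / K)"
    using P2 by (simp add: algebra_simps)
  also have "\<dots> \<le> (1 + q) * ((2 * \<theta> * (\<sigma> / K) + 2 * \<eta> / L) / (1 - \<theta>)) + 2 * q * (\<sigma> / K)"
    using K S by (intro add_right_mono mult_left_mono d) (simp add: q_def)
  also have "\<dots> = (2 * \<theta> * (1 + q) / (1 - \<theta>) + 2 * q) * (\<sigma> / K)
                  + 2 * (1 + q) / (L * (1 - \<theta>)) * \<eta>"
    using L K gap by (simp add: divide_simps) (simp add: algebra_simps)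
  finally show "P2 \<le> (2 * \<theta> * (1 + q) / (1 - \<theta>) + 2 * q) * (\<sigma> / K)
                      + 2 * (1 + q) / (L * (1 - \<theta>)) * \<eta>" .
qed

text \<open>The constants of the statement are coarser than the sharp coefficients: they only use
  2 q \<le> 1, q \<le> sqrt (2 / r) and sqrt (2 + r) \<ge> 2.\<close>
lemma l1_coefficients_le:
  fixes L U r q :: real
  defines "\<theta> \<equiv> U / L * q"
  assumes L: "0 < L" "L \<le> U" and r: "2 * (U / L)\<^sup>2 < r"
    and q: "0 \<le> q" "q\<^sup>2 * (r + 2) \<le> 1"
  shows "4 * \<theta> / (1 - \<theta>) + 2 \<le> corC1 r L U"
    and "4 / (L * (1 - \<theta>)) \<le> corD1 r L U"
proof -
  note ratio = sparsity_ratio_bounds[OF L r q]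
  define \<rho> where "\<rho> = U / L * sqrt (2 / r)"
  have gap: "0 < 1 - \<rho>" "1 - \<rho> \<le> 1 - \<theta>"
    using ratio(4,5) by (simp_all add: \<theta>_def \<rho>_def)
  have t: "0 \<le> U / L" using L by simp
  have sr: "1 \<le> 1 / sqrt r + 1" "2 \<le> sqrt (2 + r)"
    using ratio(1) by (simp_all add: real_le_rsqrt)
  have q1: "2 * q \<le> 1 / sqrt r + 1" using ratio(2) sr(1) by linarith
  have "2 * q * 1 \<le> (1 / sqrt r + 1) * sqrt (2 + r)"
    using q1 sr q by (intro mult_mono) auto
  then have "2 * (U / L) * (2 * q) \<le> 2 * (U / L) * ((1 / sqrt r + 1) * sqrt (2 + r))"
    using t by (intro mult_left_mono) auto
  then have num: "4 * \<theta> \<le> 2 * (U / L) * (1 / sqrt r + 1) * sqrt (2 + r)"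
    by (simp add: \<theta>_def mult.assoc)
  have "4 * \<theta> / (1 - \<theta>) \<le> 2 * (U / L) * (1 / sqrt r + 1) * sqrt (2 + r) / (1 - \<rho>)"
    by (rule frac_le[OF _ num gap]) (intro mult_nonneg_nonneg; use t ratio(1) in auto)
  then show "4 * \<theta> / (1 - \<theta>) + 2 \<le> corC1 r L U"
    by (simp add: corC1_def \<rho>_def)
  have "4 / (1 - \<theta>) \<le> 2 * sqrt (2 + r) / (1 - \<rho>)"
    using gap sr by (intro frac_le) auto
  then have "4 / (1 - \<theta>) / L \<le> 2 * sqrt (2 + r) / (1 - \<rho>) / L"
    by (rule divide_right_mono) (use L in simp)
  then show "4 / (L * (1 - \<theta>)) \<le> corD1 r L U"
    by (simp add: corD1_def \<rho>_def mult.commute)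
qed

lemma l2_coefficients_le:
  fixes L U r q :: real
  defines "\<theta> \<equiv> U / L * q"
  assumes L: "0 < L" "L \<le> U" and r: "2 * (U / L)\<^sup>2 < r"
    and q: "0 \<le> q" "q\<^sup>2 * (r + 2) \<le> 1"
  shows "2 * \<theta> * (1 + q) / (1 - \<theta>) + 2 * q \<le> corC2 r L U"
    and "2 * (1 + q) / (L * (1 - \<theta>)) \<le> corD2 r L U"
proof -
  note ratio = sparsity_ratio_bounds[OF L r q]
  define \<rho> where "\<rho> = U / L * sqrt (2 / r)"
  have gap: "0 < 1 - \<rho>" "1 - \<rho> \<le> 1 - \<theta>"
    using ratio(4,5) by (simp_all add: \<theta>_def \<rho>_def)
  have t: "0 \<le> U / L" using L by simp
  have half: "1 / sqrt (r / 2) = sqrt (2 / r)" by (simp add: real_sqrt_divide)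
  have "0 \<le> 1 / sqrt r" using ratio(1) by simp
  then have q1: "2 * q \<le> 1 / sqrt r + 1" using ratio(2) by linarith
  have "2 * q * (1 + q) \<le> (1 / sqrt r + 1) * (1 + sqrt (2 / r))"
    using q1 ratio(3) q by (intro mult_mono) auto
  then have "U / L * (2 * q * (1 + q)) \<le> U / L * ((1 / sqrt r + 1) * (1 + sqrt (2 / r)))"
    using t by (rule mult_left_mono)
  then have num: "2 * \<theta> * (1 + q) \<le> U / L * (1 / sqrt r + 1) * (1 + sqrt (2 / r))"
    by (simp add: \<theta>_def mult.assoc mult.left_commute)
  have "2 * \<theta> * (1 + q) / (1 - \<theta>)
      \<le> U / L * (1 / sqrt r + 1) * (1 + sqrt (2 / r)) / (1 - \<rho>)"
    by (rule frac_le[OF _ num gap]) (intro mult_nonneg_nonneg; use t ratio(1) in auto)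
  then show "2 * \<theta> * (1 + q) / (1 - \<theta>) + 2 * q \<le> corC2 r L U"
    using q1 by (simp add: corC2_def \<rho>_def half)
  have "2 * (1 + q) / (1 - \<theta>) \<le> 2 * (1 + sqrt (2 / r)) / (1 - \<rho>)"
    using gap ratio(3) q by (intro frac_le) auto
  then have "2 * (1 + q) / (1 - \<theta>) / L \<le> 2 * (1 + sqrt (2 / r)) / (1 - \<rho>) / L"
    by (rule divide_right_mono) (use L in simp)
  then show "2 * (1 + q) / (L * (1 - \<theta>)) \<le> corD2 r L U"
    by (simp add: corD2_def \<rho>_def half mult.commute)
qed

lemma exists_sparsity_level:
  fixes r :: real and k :: nat
  assumes "0 < r" and "1 \<le> k"
  obtains s :: nat where "(r + 2) * k \<le> s" and "k + s \<le> (r + 4) * k"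
proof
  have "0 \<le> (r + 2) * k" using assms(1) by simp
  then have "real (nat \<lceil>(r + 2) * k\<rceil>) = of_int \<lceil>(r + 2) * k\<rceil>" by simp
  then show "(r + 2) * k \<le> nat \<lceil>(r + 2) * k\<rceil>"
    and "k + nat \<lceil>(r + 2) * k\<rceil> \<le> (r + 4) * k"
    using of_int_ceiling_le_add_one[of "(r + 2) * k"] assms(2) by (simp_all add: algebra_simps)
qed

lemma scalar_recovery_bounds:
  fixes L U r \<sigma> \<sigma>\<^sub>k \<eta> d a P1 P2 :: real and k s :: nat
  assumes L: "0 < L" "L \<le> U" and r: "2 * (U / L)\<^sup>2 < r"
    and k: "1 \<le> k" and s: "(r + 2) * k \<le> s"
    and \<sigma>: "0 \<le> \<sigma>" "\<sigma> \<le> \<sigma>\<^sub>k" and \<eta>: "0 \<le> \<eta>"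
    and tube: "L * d \<le> U * (a + \<sigma>) / sqrt s + 2 * \<eta>" and cone: "a \<le> sqrt k * d + \<sigma>"
    and P1: "P1 \<le> sqrt k * d + a + \<sigma>" and P2: "P2 \<le> d + (a + \<sigma>) / sqrt s"
  shows "P1 \<le> corC1 r L U * \<sigma>\<^sub>k + corD1 r L U * sqrt k * \<eta>"
    and "P2 \<le> corC2 r L U * \<sigma>\<^sub>k / sqrt k + corD2 r L U * \<eta>"
proof -
  define q where "q = sqrt k / sqrt s"
  have "0 \<le> 2 * (U / L)\<^sup>2" by simp
  then have r0: "0 < r" using r by linarith
  have "0 < (r + 2) * k" using r0 k by simp
  then have s0: "0 < real s" using s by linarith
  have q: "0 \<le> q" "q\<^sup>2 * (r + 2) \<le> 1"
    using s s0 by (simp_all add: q_def power_divide field_simps)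
  note ratio = sparsity_ratio_bounds[OF L r q]
  have \<theta>0: "0 \<le> U / L * q" using L q by simp
  have \<theta>1: "U / L * q < 1" using ratio(4,5) by linarith
  note sharp = sharp_error_bounds[OF L(1) _ _ _ _ tube cone P1 P2, folded q_def]
  note coeff = l1_coefficients_le[OF L r q] l2_coefficients_le[OF L r q]
  have "0 \<le> 4 * (U / L * q) / (1 - U / L * q)" "0 \<le> 4 / (L * (1 - U / L * q))"
    "0 \<le> 2 * (U / L * q) * (1 + q) / (1 - U / L * q)" "0 \<le> 2 * (1 + q) / (L * (1 - U / L * q))"
    using \<theta>0 \<theta>1 L q(1) by simp_all
  then have coeff_nonneg: "0 \<le> corC1 r L U" "0 \<le> corD1 r L U" "0 \<le> corC2 r L U" "0 \<le> corD2 r L U"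
    using coeff q(1) by linarith+
  have "P1 \<le> (4 * (U / L * q) / (1 - U / L * q) + 2) * \<sigma>
             + 4 / (L * (1 - U / L * q)) * sqrt k * \<eta>"
    using sharp(1) L k s0 \<theta>1 by simp
  also have "\<dots> \<le> corC1 r L U * \<sigma>\<^sub>k + corD1 r L U * sqrt k * \<eta>"
    using coeff(1,2) coeff_nonneg \<sigma> \<eta> \<theta>0 \<theta>1
    by (intro add_mono mult_mono mult_right_mono) auto
  finally show "P1 \<le> corC1 r L U * \<sigma>\<^sub>k + corD1 r L U * sqrt k * \<eta>" .
  have "P2 \<le> (2 * (U / L * q) * (1 + q) / (1 - U / L * q) + 2 * q) * (\<sigma> / sqrt k)
             + 2 * (1 + q) / (L * (1 - U / L * q)) * \<eta>"
    using sharp(2) L k s0 \<theta>1 by simp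
  also have "\<dots> \<le> corC2 r L U * (\<sigma>\<^sub>k / sqrt k) + corD2 r L U * \<eta>"
    using coeff(3,4) coeff_nonneg \<sigma> \<eta> \<theta>0 \<theta>1 q(1)
    by (intro add_mono mult_mono mult_right_mono divide_right_mono) auto
  finally show "P2 \<le> corC2 r L U * \<sigma>\<^sub>k / sqrt k + corD2 r L U * \<eta>" by simp
qed

section \<open>Recovery error\<close>

lemma sparse_head_small_tail:
  fixes A :: "'a::real_normed_field ^ 'n ^ 'm" and y :: "'a ^ 'n"
  assumes A: "\<And>z. l0norm z \<le> s \<Longrightarrow> norm (A *v z) \<le> U * norm z" and U: "0 \<le> U"
    and T: "card T \<le> k"
  obtains u where "l0norm u \<le> k + s" and "\<forall>i\<in>T. u $ i = y $ i"
    and "norm (A *v (y - u)) * sqrt s \<le> U * (\<Sum>i\<in>-T. norm (y $ i))"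
    and "norm (y - u) * sqrt s \<le> (\<Sum>i\<in>-T. norm (y $ i))"
proof -
  obtain T' where T': "best_support s (vec_restrict (-T) y) T'" by (rule best_support_exists)
  define u where "u = vec_restrict (T \<union> T') y"
  have tail: "y - u = vec_restrict (-T') (vec_restrict (-T) y)"
    by (simp add: u_def vec_eq_iff)
  have mass: "l1norm (vec_restrict (-T) y) = (\<Sum>i\<in>-T. norm (y $ i))"
    by (rule l1norm_vec_restrict)
  have id: "norm (id z) \<le> 1 * norm z" for z :: "'a ^ 'n" by simp
  have "l0norm u \<le> k + s"
    using l0norm_vec_restrict[of "T \<union> T'" y] card_Un_le[of T T'] T best_support_card[OF T']
    unfolding u_def by linarith
  moreover have "\<forall>i\<in>T. u $ i = y $ i" by (simp add: u_def)
  moreover have "norm (A *v (y - u)) * sqrt s \<le> U * (\<Sum>i\<in>-T. norm (y $ i))"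
    using shelling_best_support[OF T' _ U A] unfolding tail mass by simp
  moreover have "norm (y - u) * sqrt s \<le> (\<Sum>i\<in>-T. norm (y $ i))"
    using shelling_best_support[OF T' linear_id _ id] unfolding tail mass by simp
  ultimately show ?thesis by (rule that)
qed

lemma phaseless_recovery_estimates:
  fixes A :: "'a::real_normed_field ^ 'n ^ 'm" and x xs :: "'a ^ 'n"
  assumes biLip: "phaseless_biLip A X L U" and sparse: "{z. l0norm z \<le> k + s} \<subseteq> X"
    and s: "1 \<le> s" and l1: "l1norm xs \<le> l1norm x"
    and close: "norm (absAx A xs - absAx A x) \<le> 2 * \<eta>"
  obtains \<sigma> a d where "0 \<le> \<sigma>" and "\<sigma> \<le> sigma1 k x"
    and "L * d \<le> U * (a + \<sigma>) / sqrt s + 2 * \<eta>" and "a \<le> sqrt k * d + \<sigma>"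
    and "pdist l1norm xs x \<le> sqrt k * d + a + \<sigma>" and "pdist norm xs x \<le> d + (a + \<sigma>) / sqrt s"
proof -
  have U: "0 \<le> U" using biLip by (simp add: phaseless_biLip_def)
  have "0 \<in> X" using sparse by (auto simp: l0norm_def)
  then have A: "norm (A *v z) \<le> U * norm z" if "l0norm z \<le> s" for z
    using phaseless_biLip_norm_le[OF biLip] subsetD[OF sparse, of z] that by simp
  obtain T where T: "best_support k x T" by (rule best_support_exists)
  define \<sigma> where "\<sigma> = (\<Sum>i\<in>-T. norm (x $ i))"
  define a where "a = (\<Sum>i\<in>-T. norm (xs $ i))"
  obtain u where u: "l0norm u \<le> k + s" "\<forall>i\<in>T. u $ i = xs $ i"
    "norm (A *v (xs - u)) * sqrt s \<le> U * a" "norm (xs - u) * sqrt s \<le> a"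
    using sparse_head_small_tail[OF A U best_support_card[OF T]] unfolding a_def .
  obtain v where v: "l0norm v \<le> k + s" "\<forall>i\<in>T. v $ i = x $ i"
    "norm (A *v (x - v)) * sqrt s \<le> U * \<sigma>" "norm (x - v) * sqrt s \<le> \<sigma>"
    using sparse_head_small_tail[OF A U best_support_card[OF T]] unfolding \<sigma>_def .
  define d where "d = pdist norm u v"
  have "u \<in> X" "v \<in> X" using u(1) v(1) sparse by auto
  then have "L * d \<le> norm (absAx A u - absAx A v)"
    using biLip unfolding phaseless_biLip_def d_def l2norm_eq_norm by blast
  also have "\<dots> \<le> norm (A *v (xs - u)) + 2 * \<eta> + norm (A *v (x - v))"
    using norm_absAx_diff_triangle[of A u v xs x] close by linarith
  also have "\<dots> \<le> U * (a + \<sigma>) / sqrt s + 2 * \<eta>"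
    using u(3) v(3) s by (simp add: field_simps)
  finally have tube: "L * d \<le> U * (a + \<sigma>) / sqrt s + 2 * \<eta>" .
  have cone: "a \<le> sqrt k * d + \<sigma>"
    unfolding a_def \<sigma>_def d_def by (rule l1_tail_le_cone[OF l1 best_support_card[OF T] u(2) v(2)])
  have l1_error: "pdist l1norm xs x \<le> sqrt k * d + a + \<sigma>"
    using pdist_l1norm_le_cone[OF best_support_card[OF T] u(2) v(2)]
    unfolding a_def \<sigma>_def d_def by (simp add: add.assoc)
  have "norm (xs - u) + norm (x - v) \<le> (a + \<sigma>) / sqrt s"
    using u(4) v(4) s by (simp add: field_simps)
  then have l2_error: "pdist norm xs x \<le> d + (a + \<sigma>) / sqrt s"
    using pdist_norm_triangle[of xs x u v] unfolding d_def by linarith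
  show ?thesis
    using that[OF _ _ tube cone l1_error l2_error] sigma1_ge_tail[OF T]
    unfolding \<sigma>_def by (simp add: sum_nonneg)
qed

theorem Delta1_recovery_error:
  fixes A :: "'a::real_normed_field ^ 'n ^ 'm" and x xs :: "'a ^ 'n" and e :: "real ^ 'm"
  assumes biLip: "phaseless_biLip A {x. real (l0norm x) \<le> (r + 4) * real k} L U"
    and k: "1 \<le> k" and r: "0 < r" "2 * (U / L)\<^sup>2 < r"
    and \<eta>: "0 \<le> \<eta>" "l2norm e \<le> \<eta>" and xs: "xs \<in> Delta1 A \<eta> (absAx A x + e)"
  shows "pdist l1norm xs x \<le> corC1 r L U * sigma1 k x + corD1 r L U * sqrt (real k) * \<eta> \<and>
         pdist l2norm xs x \<le> corC2 r L U * sigma1 k x / sqrt (real k) + corD2 r L U * \<eta>"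
proof -
  let ?X = "{x :: 'a ^ 'n. real (l0norm x) \<le> (r + 4) * real k}"
  obtain s :: nat where s: "(r + 2) * k \<le> s" "k + s \<le> (r + 4) * k"
    using exists_sparsity_level[OF r(1) k] by blast
  have "0 < (r + 2) * k" using r(1) k by simp
  then have "1 \<le> s" using s(1) by linarith
  have sparse: "{z. l0norm z \<le> k + s} \<subseteq> ?X"
    using s(2) by (auto intro: order_trans[of _ "real (k + s)"])
  have "l0norm (axis i (1 :: 'a)) \<le> k + s" for i
    using k by (simp add: l0norm_def axis_def)
  then have "L \<le> U"
    using phaseless_biLip_lower_le_upper[OF biLip, of "axis undefined 1"] sparse
    by (auto simp: l0norm_def)
  moreover have "0 < L" using biLip by (simp add: phaseless_biLip_def)
  moreover obtain \<sigma> a d where "0 \<le> \<sigma>" "\<sigma> \<le> sigma1 k x"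
    "L * d \<le> U * (a + \<sigma>) / sqrt s + 2 * \<eta>" "a \<le> sqrt k * d + \<sigma>"
    "pdist l1norm xs x \<le> sqrt k * d + a + \<sigma>" "pdist norm xs x \<le> d + (a + \<sigma>) / sqrt s"
    using phaseless_recovery_estimates[OF biLip sparse \<open>1 \<le> s\<close> Delta1_l1norm_le[OF xs \<eta>(2)]
        Delta1_absAx_close[OF xs \<eta>(2)]] .
  ultimately show ?thesis
    using scalar_recovery_bounds[of L U r k s] r(2) k s(1) \<eta>(1) by (simp add: l2norm_eq_norm)
qed

theorem corollary2p4:
  fixes k :: nat and r L U :: real
  assumes "1 \<le> k" and "k \<le> CARD('n)" and "r > 0" and "L > 0" and "U > 0"
    and "r > 2 * (U / L)^2"
  shows
   "(\<forall>A :: real ^ 'n ^ 'm.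
      phaseless_biLip A {x. real (l0norm x) \<le> (r + 4) * real k} L U \<longrightarrow>
      (\<forall>(x :: real ^ 'n) (\<eta> :: real) (e :: real ^ 'm) xs.
         \<eta> \<ge> 0 \<longrightarrow> l2norm e \<le> \<eta> \<longrightarrow> xs \<in> Delta1 A \<eta> (absAx A x + e) \<longrightarrow>
         pdist l1norm xs x \<le> corC1 r L U * sigma1 k x + corD1 r L U * sqrt (real k) * \<eta> \<and>
         pdist l2norm xs x \<le> corC2 r L U * sigma1 k x / sqrt (real k) + corD2 r L U * \<eta>))
  \<and>
   (\<forall>A :: complex ^ 'n ^ 'm.
      phaseless_biLip A {x. real (l0norm x) \<le> (r + 4) * real k} L U \<longrightarrow>
      (\<forall>(x :: complex ^ 'n) (\<eta> :: real) (e :: real ^ 'm) xs.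
         \<eta> \<ge> 0 \<longrightarrow> l2norm e \<le> \<eta> \<longrightarrow> xs \<in> Delta1 A \<eta> (absAx A x + e) \<longrightarrow>
         pdist l1norm xs x \<le> corC1 r L U * sigma1 k x + corD1 r L U * sqrt (real k) * \<eta> \<and>
         pdist l2norm xs x \<le> corC2 r L U * sigma1 k x / sqrt (real k) + corD2 r L U * \<eta>))"
  using Delta1_recovery_error[where 'a = real, OF _ assms(1,3,6)]
    Delta1_recovery_error[where 'a = complex, OF _ assms(1,3,6)]
  by blast

end
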